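(* The number $K_T$ of episodes of \texttt{UCMNLK} over $T$ steps satisfies $K_T\le1+d\log_2(1+2TL_\varphi^2/\lambda)$.
   Context: \texttt{UCMNLK} maintains $\Sigma_1=\lambda I_d$ ($\lambda>0$) and $\Sigma_{t+1}=\Sigma_t+\nabla^2\ell_t(\widehat\theta_{t+1})$, where $\ell_t(\theta)=-\sum_{s'\in\mathcal S_t}y_{t,s'}\log p_{t,s'}(\theta)$ is the multinomial log-loss at step $t$ with Hessian $\nabla^2\ell_t(\theta)=\sum_{s'}p_{t,s'}(\theta)\varphi_{t,s'}\varphi_{t,s'}^\top-\sum_{s',s''}p_{t,s'}(\theta)p_{t,s''}(\theta)\varphi_{t,s'}\varphi_{t,s''}^\top$, $p_{t,\cdot}(\theta)$ a probability vector on the finite set $\mathcal S_t$, and $\|\varphi_{t,s'}\|_2\le L_\varphi$. A new episode starts at time $t$ (and $t_{k+1}=t$) as soon as $\det\Sigma_t>2\det\Sigma_{t_k}$, where $t_k$ is the start of the current episode. *)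

theory Defs
  imports "HOL-Analysis.Analysis"
begin

definition mnl_hess :: "'s set \<Rightarrow> ('s \<Rightarrow> real) \<Rightarrow> ('s \<Rightarrow> real^'n) \<Rightarrow> real^'n^'n" where
  "mnl_hess A p phi =
     (\<chi> i j. (\<Sum>s\<in>A. p s * (phi s $ i) * (phi s $ j))
            - (\<Sum>s\<in>A. \<Sum>s'\<in>A. p s * p s' * (phi s $ i) * (phi s' $ j)))"

text \<open>Gram matrices of UCMNLK: Sigma 1 = lambda I, Sigma (t+1) = Sigma t + H t,
  where H t is the Hessian at step t (evaluated at the estimate theta_(t+1)).
  Index 0 is a dummy (set equal to Sigma 1).\<close>
fun ucm_sigma :: "real \<Rightarrow> (nat \<Rightarrow> real^'n^'n) \<Rightarrow> nat \<Rightarrow> real^'n^'n" where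
  "ucm_sigma lam H 0 = lam *\<^sub>R mat 1"
| "ucm_sigma lam H (Suc 0) = lam *\<^sub>R mat 1"
| "ucm_sigma lam H (Suc (Suc t)) = ucm_sigma lam H (Suc t) + H (Suc t)"

text \<open>Start time of the episode that is current at time t (t >= 1): episode 1 starts at
  time 1; a new episode starts at time t as soon as det Sigma_t > 2 det Sigma_(t_k).\<close>
fun ep_start :: "(nat \<Rightarrow> real^'n^'n) \<Rightarrow> nat \<Rightarrow> nat" where
  "ep_start S 0 = 1"
| "ep_start S (Suc 0) = 1"
| "ep_start S (Suc (Suc t)) =
     (if det (S (Suc (Suc t))) > 2 * det (S (ep_start S (Suc t))) then Suc (Suc t)
      else ep_start S (Suc t))"

definition num_episodes :: "(nat \<Rightarrow> real^'n^'n) \<Rightarrow> nat \<Rightarrow> nat" where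
  "num_episodes S T = card {t \<in> {1..T}. ep_start S t = t}"

end

theory Submission
  imports Defs "Jordan_Normal_Form.Schur_Decomposition"
begin

text \<open>Every Hessian is positive semidefinite with trace at most \<open>L\<^sup>2\<close>, so \<open>\<Sigma>\<^sub>t\<close> is
  positive semidefinite with trace at most \<open>d \<lambda> + (t - 1) L\<^sup>2\<close>. For a positive semidefinite
  matrix, \<open>det \<le> (trace / d)\<^sup>d\<close> by AM-GM on its eigenvalues, which are real and nonnegative
  (over \<open>\<complex>\<close> the matrix is triangularised by Schur's theorem). Hence all determinants up
  to time \<open>T\<close> are at most \<open>(\<lambda> (1 + 2 T L\<^sup>2 / \<lambda>))\<^sup>d\<close>. Each new episode more than doubles
  the determinant of the previous episode start, so \<open>2\<^bsup>K - 1\<^esup> det \<Sigma>\<^sub>1 \<le> det \<Sigma>\<^bsub>t\<^sub>K\<^esub>\<close>, and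
  \<open>det \<Sigma>\<^sub>1 = \<lambda>\<^sup>d\<close> gives the bound after taking logarithms.\<close>

no_notation Matrix.vec_index (infixl "$" 100)
no_notation Matrix.scalar_prod (infix "\<bullet>" 70)

section \<open>Determinant versus trace of a positive semidefinite matrix\<close>

lemma prod_le_mean_power:
  fixes f :: "'a \<Rightarrow> real"
  assumes "finite A" and nonneg: "\<And>i. i \<in> A \<Longrightarrow> 0 \<le> f i"
  shows "(\<Prod>i\<in>A. f i) \<le> ((\<Sum>i\<in>A. f i) / card A) ^ card A"
proof (cases "(\<Sum>i\<in>A. f i) = 0")
  case True
  then have "\<forall>i\<in>A. f i = 0"
    using assms by (simp add: sum_nonneg_eq_0_iff)
  with True \<open>finite A\<close> show ?thesis
    by (cases "A = {}") (auto simp: prod_zero)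
next
  case False
  define m where "m = (\<Sum>i\<in>A. f i) / card A"
  have "A \<noteq> {}" using False by auto
  have "0 < (\<Sum>i\<in>A. f i)"
    using False sum_nonneg[of A f] nonneg by fastforce
  then have "0 < m"
    using \<open>finite A\<close> \<open>A \<noteq> {}\<close> by (simp add: m_def card_gt_0_iff)
  \<comment> \<open>each factor satisfies \<open>u \<le> exp (u - 1)\<close>, and the exponents sum to zero\<close>
  have "(\<Prod>i\<in>A. f i / m) \<le> (\<Prod>i\<in>A. exp (f i / m - 1))"
  proof (rule prod_mono)
    fix i assume "i \<in> A"
    then show "0 \<le> f i / m \<and> f i / m \<le> exp (f i / m - 1)"
      using nonneg \<open>0 < m\<close> exp_ge_add_one_self[of "f i / m - 1"] by simp
  qed
  also have "\<dots> = exp (\<Sum>i\<in>A. f i / m - 1)"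
    by (simp add: exp_sum \<open>finite A\<close>)
  also have "(\<Sum>i\<in>A. f i / m - 1) = 0"
  proof -
    have "(\<Sum>i\<in>A. f i / m) = (\<Sum>i\<in>A. f i) / m"
      by (simp add: sum_divide_distrib)
    also have "\<dots> = card A"
      using \<open>0 < (\<Sum>i\<in>A. f i)\<close> by (simp add: m_def)
    finally show ?thesis by (simp add: sum_subtractf)
  qed
  finally have "(\<Prod>i\<in>A. f i) / m ^ card A \<le> 1"
    by (simp add: prod_dividef)
  then show ?thesis
    using \<open>0 < m\<close> by (simp add: m_def[symmetric])
qed

definition mat_trace :: "'a::comm_semiring_1 mat \<Rightarrow> 'a" where
  "mat_trace A = (\<Sum>i = 0..<dim_row A. A $$ (i, i))"

lemma mat_trace_mult_comm:
  fixes A B :: "'a::comm_semiring_1 mat"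
  assumes "A \<in> carrier_mat n m" and "B \<in> carrier_mat m n"
  shows "mat_trace (A * B) = mat_trace (B * A)"
proof -
  have "mat_trace (A * B) = (\<Sum>i = 0..<n. \<Sum>k = 0..<m. A $$ (i, k) * B $$ (k, i))"
    using assms by (auto simp: mat_trace_def scalar_prod_def intro!: sum.cong)
  also have "\<dots> = (\<Sum>k = 0..<m. \<Sum>i = 0..<n. B $$ (k, i) * A $$ (i, k))"
    by (subst sum.swap) (simp add: mult.commute)
  also have "\<dots> = mat_trace (B * A)"
    using assms by (auto simp: mat_trace_def scalar_prod_def intro!: sum.cong)
  finally show ?thesis .
qed

lemma mat_trace_similar:
  fixes A B :: "'a::comm_ring_1 mat"
  assumes "similar_mat A B"
  shows "mat_trace A = mat_trace B"
proof -
  obtain n P Q where carr: "{A, B, P, Q} \<subseteq> carrier_mat n n"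
    and QP: "Q * P = 1\<^sub>m n" and A: "A = P * B * Q"
    using similar_matD[OF assms] by blast
  have "mat_trace A = mat_trace (P * (B * Q))"
    using carr by (simp add: A assoc_mult_mat[of P n n B n Q n])
  also have "\<dots> = mat_trace (B * Q * P)"
    using carr by (intro mat_trace_mult_comm[of P n n]) auto
  also have "B * Q * P = B"
    using carr by (simp add: assoc_mult_mat[of B n n Q n P n] QP right_mult_one_mat[of B n n])
  finally show ?thesis .
qed

lemma hermitian_form_of_real_symmetric:
  fixes M :: "real mat" and z :: "nat \<Rightarrow> complex"
  assumes sym: "\<And>i j. i < n \<Longrightarrow> j < n \<Longrightarrow> M $$ (i, j) = M $$ (j, i)"
  shows "(\<Sum>i = 0..<n. \<Sum>j = 0..<n. cnj (z i) * of_real (M $$ (i, j)) * z j)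
    = of_real ((\<Sum>i = 0..<n. \<Sum>j = 0..<n. Re (z i) * M $$ (i, j) * Re (z j))
             + (\<Sum>i = 0..<n. \<Sum>j = 0..<n. Im (z i) * M $$ (i, j) * Im (z j)))"
proof (rule complex_eqI)
  have "(\<Sum>i = 0..<n. \<Sum>j = 0..<n. Im (z i) * M $$ (i, j) * Re (z j))
      = (\<Sum>i = 0..<n. \<Sum>j = 0..<n. Re (z i) * M $$ (i, j) * Im (z j))"
    by (subst sum.swap) (auto simp: sym intro!: sum.cong)
  then show "Im (\<Sum>i = 0..<n. \<Sum>j = 0..<n. cnj (z i) * of_real (M $$ (i, j)) * z j) = Im (of_real
     ((\<Sum>i = 0..<n. \<Sum>j = 0..<n. Re (z i) * M $$ (i, j) * Re (z j))
    + (\<Sum>i = 0..<n. \<Sum>j = 0..<n. Im (z i) * M $$ (i, j) * Im (z j))))"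
    by (simp add: sum_subtractf algebra_simps)
qed (simp add: sum.distrib algebra_simps)

lemma psd_eigenvalue_nonneg_real:
  fixes M :: "real mat"
  assumes M: "M \<in> carrier_mat n n"
    and sym: "\<And>i j. i < n \<Longrightarrow> j < n \<Longrightarrow> M $$ (i, j) = M $$ (j, i)"
    and psd: "\<And>x. 0 \<le> (\<Sum>i = 0..<n. \<Sum>j = 0..<n. x i * M $$ (i, j) * x j)"
    and ev: "eigenvalue (map_mat complex_of_real M) e"
  shows "e \<in> \<real> \<and> 0 \<le> Re e"
proof -
  obtain v where v: "v \<in> carrier_vec n" "v \<noteq> 0\<^sub>v n" "map_mat of_real M *\<^sub>v v = e \<cdot>\<^sub>v v"
    using ev M unfolding eigenvalue_def eigenvector_def by auto
  define q where "q = (\<Sum>i = 0..<n. \<Sum>j = 0..<n. Re (vec_index v i) * M $$ (i, j) * Re (vec_index v j))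
                    + (\<Sum>i = 0..<n. \<Sum>j = 0..<n. Im (vec_index v i) * M $$ (i, j) * Im (vec_index v j))"
  define r where "r = (\<Sum>i = 0..<n. (cmod (vec_index v i))\<^sup>2)"
  have "0 < r"
  proof -
    obtain k where "k < n" "vec_index v k \<noteq> 0" using v(1,2) by (auto simp: vec_eq_iff)
    then show ?thesis unfolding r_def by (intro sum_pos2[of _ k]) auto
  qed
  \<comment> \<open>evaluate the Hermitian form \<open>v\<^sup>* M v\<close> in two ways\<close>
  have "(\<Sum>i = 0..<n. cnj (vec_index v i) * vec_index (map_mat of_real M *\<^sub>v v) i)
      = (\<Sum>i = 0..<n. \<Sum>j = 0..<n. cnj (vec_index v i) * of_real (M $$ (i, j)) * vec_index v j)"
    using M v(1) by (simp add: scalar_prod_def sum_distrib_left mult.assoc)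
  also have "\<dots> = of_real q"
    unfolding q_def by (rule hermitian_form_of_real_symmetric[OF sym])
  finally have "of_real q = e * of_real r"
    using v by (simp add: r_def sum_distrib_left mult_ac flip: complex_norm_square)
  then have "e = of_real (q / r)"
    using \<open>0 < r\<close> by (simp add: field_simps)
  moreover have "0 \<le> q"
    using psd by (simp add: q_def)
  ultimately show ?thesis
    using \<open>0 < r\<close> by simp
qed

lemma det_le_mat_trace_power:
  fixes M :: "real mat"
  assumes M: "M \<in> carrier_mat n n"
    and sym: "\<And>i j. i < n \<Longrightarrow> j < n \<Longrightarrow> M $$ (i, j) = M $$ (j, i)"
    and psd: "\<And>x. 0 \<le> (\<Sum>i = 0..<n. \<Sum>j = 0..<n. x i * M $$ (i, j) * x j)"
  shows "Determinant.det M \<le> (mat_trace M / n) ^ n"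
proof -
  let ?C = "map_mat complex_of_real M"
  have C: "?C \<in> carrier_mat n n" using M by simp
  obtain B where B: "B \<in> carrier_mat n n" "upper_triangular B" "similar_mat ?C B"
    using char_poly_factorized[OF C] schur_decomposition_exists[OF C] by blast
  have ev: "B $$ (i, i) \<in> \<real> \<and> 0 \<le> Re (B $$ (i, i))" if "i < n" for i
  proof -
    have "char_poly ?C = (\<Prod>a\<leftarrow>diag_mat B. [:- a, 1:])"
      using char_poly_similar[OF B(3)] char_poly_upper_triangular[OF B(1,2)] by simp
    then have "eigenvalue ?C (B $$ (i, i))"
      using that B(1) by (auto simp: eigenvalue_root_char_poly[OF C] poly_prod_list diag_mat_def)
    then show ?thesis using psd_eigenvalue_nonneg_real[OF M sym psd] by blast
  qed
  define d where "d i = Re (B $$ (i, i))" for i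
  have d: "B $$ (i, i) = of_real (d i) \<and> 0 \<le> d i" if "i < n" for i
    using ev[OF that] by (simp add: d_def)
  have "of_real (Determinant.det M) = Determinant.det B"
    using det_similar[OF B(3)] by simp
  also have "\<dots> = of_real (\<Prod>i = 0..<n. d i)"
    using B(1) d by (simp add: det_upper_triangular[OF B(2,1)] prod_list_diag_prod)
  finally have det: "Determinant.det M = (\<Prod>i = 0..<n. d i)"
    by (simp only: of_real_eq_iff)
  have "of_real (mat_trace M) = mat_trace B"
    using mat_trace_similar[OF B(3)] M by (simp add: mat_trace_def)
  also have "\<dots> = of_real (\<Sum>i = 0..<n. d i)"
    using B(1) d by (simp add: mat_trace_def)
  finally have tr: "mat_trace M = (\<Sum>i = 0..<n. d i)"
    by (simp only: of_real_eq_iff)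
  show ?thesis
    unfolding det tr using prod_le_mean_power[of "{0..<n}" d] d by simp
qed

definition mat_of_cart :: "(nat \<Rightarrow> 'n) \<Rightarrow> 'a^'n^'n \<Rightarrow> 'a mat" where
  "mat_of_cart h A = Matrix.mat CARD('n) CARD('n) (\<lambda>(i, j). A $ h i $ h j)"

lemma det_mat_of_cart:
  fixes A :: "'a::comm_ring_1^'n^'n"
  assumes h: "bij_betw h {0..<CARD('n)} UNIV"
  shows "Determinant.det (mat_of_cart h A) = Determinants.det A"
proof -
  let ?n = "CARD('n)"
  let ?F = "\<lambda>p x. if x \<in> (UNIV::'n set) then h (p (inv_into {0..<?n} h x)) else x"
  have F: "bij_betw ?F {p. p permutes {0..<?n}} {p. p permutes UNIV}"
    by (rule bij_betw_permutations[OF h])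
  have inj: "inj_on h {0..<?n}" using h by (auto simp: bij_betw_def)
  have sign: "sign (?F p) = sign p" if "p permutes {0..<?n}" for p
    by (rule permutes_bij_finite.sign_p') (unfold_locales, use that h inj in auto)
  have prod: "(\<Prod>i\<in>UNIV. A $ i $ ?F p i) = (\<Prod>i = 0..<?n. A $ h i $ h (p i))"
    if "p permutes {0..<?n}" for p
  proof -
    have "(\<Prod>i\<in>UNIV. A $ i $ ?F p i) = (\<Prod>i = 0..<?n. A $ h i $ ?F p (h i))"
      by (rule prod.reindex_bij_betw[OF h, symmetric])
    also have "\<dots> = (\<Prod>i = 0..<?n. A $ h i $ h (p i))"
      using inj by (intro prod.cong) auto
    finally show ?thesis .
  qed
  have "Determinants.det A = (\<Sum>q\<in>{p. p permutes UNIV}. of_int (sign q) * (\<Prod>i\<in>UNIV. A $ i $ q i))"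
    by (simp add: Determinants.det_def)
  also have "\<dots> = (\<Sum>p\<in>{p. p permutes {0..<?n}}. of_int (sign (?F p)) * (\<Prod>i\<in>UNIV. A $ i $ ?F p i))"
    by (rule sum.reindex_bij_betw[OF F, symmetric])
  also have "\<dots> = (\<Sum>p\<in>{p. p permutes {0..<?n}}. of_int (sign p) * (\<Prod>i = 0..<?n. A $ h i $ h (p i)))"
    using sign prod by (intro sum.cong) auto
  also have "\<dots> = Determinant.det (mat_of_cart h A)"
    by (subst Determinant.det_def') (auto simp: mat_of_cart_def intro!: sum.cong prod.cong
        dest: permutes_in_image)
  finally show ?thesis by simp
qed

lemma mat_trace_mat_of_cart:
  assumes h: "bij_betw h {0..<CARD('n)} UNIV"
  shows "mat_trace (mat_of_cart h A) = trace (A :: 'a::comm_ring_1^'n^'n)"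
  using sum.reindex_bij_betw[OF h, of "\<lambda>i. A $ i $ i"]
  by (simp add: mat_trace_def mat_of_cart_def trace_def)

definition pos_semidef :: "real^'n^'n \<Rightarrow> bool" where
  "pos_semidef A \<longleftrightarrow> transpose A = A \<and> (\<forall>x. 0 \<le> x \<bullet> (A *v x))"

lemma inner_matrix_vector_mult:
  fixes A :: "real^'n^'m"
  shows "x \<bullet> (A *v y) = (\<Sum>i\<in>UNIV. \<Sum>j\<in>UNIV. x $ i * A $ i $ j * y $ j)"
  by (simp add: inner_vec_def matrix_vector_mult_def sum_distrib_left mult.assoc)

lemma det_le_trace_power:
  fixes A :: "real^'n^'n"
  assumes "pos_semidef A"
  shows "Determinants.det A \<le> (trace A / CARD('n)) ^ CARD('n)"
proof -
  let ?n = "CARD('n)"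
  obtain h where h: "bij_betw h {0..<?n} (UNIV :: 'n set)"
    using ex_bij_betw_nat_finite[of "UNIV :: 'n set"] by auto
  have inj: "inj_on h {0..<?n}" using h by (auto simp: bij_betw_def)
  have reindex: "(\<Sum>i = 0..<?n. g (h i)) = (\<Sum>k\<in>UNIV. g k)" for g :: "'n \<Rightarrow> real"
    by (rule sum.reindex_bij_betw[OF h])
  let ?M = "mat_of_cart h A"
  have "?M \<in> carrier_mat ?n ?n" by (simp add: mat_of_cart_def)
  moreover have "?M $$ (i, j) = ?M $$ (j, i)" if "i < ?n" "j < ?n" for i j
  proof -
    have "A $ a $ b = transpose A $ b $ a" for a b
      by (simp add: transpose_def)
    then show ?thesis
      using assms that by (simp add: pos_semidef_def mat_of_cart_def)
  qed
  moreover have "0 \<le> (\<Sum>i = 0..<?n. \<Sum>j = 0..<?n. x i * ?M $$ (i, j) * x j)" for x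
  proof -
    define z :: "real^'n" where "z = (\<chi> k. x (inv_into {0..<?n} h k))"
    have "(\<Sum>i = 0..<?n. \<Sum>j = 0..<?n. x i * ?M $$ (i, j) * x j)
        = (\<Sum>i = 0..<?n. \<Sum>j = 0..<?n. z $ h i * A $ h i $ h j * z $ h j)"
      using inj by (auto simp: z_def mat_of_cart_def intro!: sum.cong)
    also have "\<dots> = z \<bullet> (A *v z)"
      unfolding inner_matrix_vector_mult by (simp only: reindex[symmetric])
    finally show ?thesis using assms by (simp add: pos_semidef_def)
  qed
  ultimately have "Determinant.det ?M \<le> (mat_trace ?M / ?n) ^ ?n"
    by (rule det_le_mat_trace_power)
  then show ?thesis
    by (simp add: det_mat_of_cart[OF h] mat_trace_mat_of_cart[OF h])
qed

lemma transpose_add: "transpose (A + B) = transpose A + transpose (B :: 'a::semiring_1^'n^'m)"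
  by (simp add: transpose_def Finite_Cartesian_Product.vec_eq_iff)

lemma pos_semidef_add:
  assumes "pos_semidef A" and "pos_semidef B"
  shows "pos_semidef (A + B)"
  using assms by (simp add: pos_semidef_def transpose_add matrix_vector_mult_add_rdistrib
      inner_add_right)

lemma pos_semidef_scaleR_mat_1:
  assumes "0 \<le> c"
  shows "pos_semidef (c *\<^sub>R Finite_Cartesian_Product.mat 1 :: real^'n^'n)"
  using assms by (simp add: pos_semidef_def transpose_scalar flip: scaleR_matrix_vector_assoc)

lemma pos_semidef_trace_nonneg:
  assumes "pos_semidef A"
  shows "0 \<le> trace A"
proof -
  have "A $ i $ i = axis i 1 \<bullet> (A *v axis i 1)" for i
    by (simp add: inner_axis' matrix_vector_mult_basis column_def)
  then show ?thesis
    using assms by (simp add: trace_def pos_semidef_def sum_nonneg)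
qed

section \<open>Hessian of the multinomial log-loss\<close>

lemma square_weighted_mean_le:
  fixes p a :: "'s \<Rightarrow> real"
  assumes "\<And>s. s \<in> A \<Longrightarrow> 0 \<le> p s" and "(\<Sum>s\<in>A. p s) = 1"
  shows "(\<Sum>s\<in>A. p s * a s)\<^sup>2 \<le> (\<Sum>s\<in>A. p s * (a s)\<^sup>2)"
proof -
  define m where "m = (\<Sum>s\<in>A. p s * a s)"
  have "0 \<le> (\<Sum>s\<in>A. p s * (a s - m)\<^sup>2)"
    using assms by (intro sum_nonneg) auto
  also have "\<dots> = (\<Sum>s\<in>A. p s * (a s)\<^sup>2) - 2 * m * (\<Sum>s\<in>A. p s * a s) + m\<^sup>2 * (\<Sum>s\<in>A. p s)"
    by (simp add: power2_diff sum.distrib sum_subtractf sum_distrib_left sum_distrib_right algebra_simps)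
  finally show ?thesis
    using assms(2) by (simp add: m_def power2_eq_square)
qed

lemma mnl_hess_component:
  "mnl_hess A p phi $ i $ j = (\<Sum>s\<in>A. p s * phi s $ i * phi s $ j)
     - (\<Sum>s\<in>A. p s * phi s $ i) * (\<Sum>s\<in>A. p s * phi s $ j)"
  by (simp add: mnl_hess_def sum_product ac_simps)

lemma inner_mnl_hess:
  "x \<bullet> (mnl_hess A p phi *v x)
     = (\<Sum>s\<in>A. p s * (x \<bullet> phi s)\<^sup>2) - (\<Sum>s\<in>A. p s * (x \<bullet> phi s))\<^sup>2"
proof -
  have "(\<Sum>i\<in>UNIV. \<Sum>j\<in>UNIV. x $ i * (\<Sum>s\<in>A. p s * phi s $ i * phi s $ j) * x $ j)
      = (\<Sum>s\<in>A. \<Sum>i\<in>UNIV. \<Sum>j\<in>UNIV. p s * (x $ i * phi s $ i) * (x $ j * phi s $ j))"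
    by (simp add: sum_distrib_left sum_distrib_right sum.swap[of _ A] ac_simps)
  also have "\<dots> = (\<Sum>s\<in>A. p s * (x \<bullet> phi s)\<^sup>2)"
    by (simp add: inner_vec_def power2_eq_square sum_distrib_left sum_distrib_right ac_simps)
  finally have sq: "(\<Sum>i\<in>UNIV. \<Sum>j\<in>UNIV. x $ i * (\<Sum>s\<in>A. p s * phi s $ i * phi s $ j) * x $ j)
      = (\<Sum>s\<in>A. p s * (x \<bullet> phi s)\<^sup>2)" .
  have "(\<Sum>s\<in>A. p s * (x \<bullet> phi s)) = (\<Sum>i\<in>UNIV. x $ i * (\<Sum>s\<in>A. p s * phi s $ i))"
    by (simp add: inner_vec_def sum_distrib_left sum.swap[of _ A] ac_simps)
  then have mean: "(\<Sum>i\<in>UNIV. \<Sum>j\<in>UNIV. x $ i * ((\<Sum>s\<in>A. p s * phi s $ i) * (\<Sum>s\<in>A. p s * phi s $ j)) * x $ j)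
      = (\<Sum>s\<in>A. p s * (x \<bullet> phi s))\<^sup>2"
    by (simp add: power2_eq_square sum_distrib_left sum_distrib_right ac_simps)
  show ?thesis
    by (simp add: inner_matrix_vector_mult mnl_hess_component right_diff_distrib left_diff_distrib
        sum_subtractf flip: sq mean)
qed

lemma transpose_mnl_hess: "transpose (mnl_hess A p phi) = mnl_hess A p phi"
  by (simp add: transpose_def Finite_Cartesian_Product.vec_eq_iff mnl_hess_component mult_ac)

lemma pos_semidef_mnl_hess:
  assumes "\<And>s. s \<in> A \<Longrightarrow> 0 \<le> p s" and "(\<Sum>s\<in>A. p s) = 1"
  shows "pos_semidef (mnl_hess A p phi)"
  using square_weighted_mean_le[OF assms]
  by (simp add: pos_semidef_def transpose_mnl_hess inner_mnl_hess)

lemma trace_mnl_hess_le: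
  assumes "\<And>s. s \<in> A \<Longrightarrow> 0 \<le> p s" and "(\<Sum>s\<in>A. p s) = 1"
    and "\<And>s. s \<in> A \<Longrightarrow> norm (phi s) \<le> L"
  shows "trace (mnl_hess A p phi) \<le> L\<^sup>2"
proof -
  have "trace (mnl_hess A p phi) \<le> (\<Sum>i\<in>UNIV. \<Sum>s\<in>A. p s * (phi s $ i * phi s $ i))"
    unfolding trace_def mnl_hess_component by (intro sum_mono) (simp add: mult.assoc)
  also have "\<dots> = (\<Sum>s\<in>A. p s * (norm (phi s))\<^sup>2)"
    by (simp add: sum.swap[of _ UNIV] sum_distrib_left power2_norm_eq_inner inner_vec_def)
  also have "\<dots> \<le> (\<Sum>s\<in>A. p s * L\<^sup>2)"
    using assms by (intro sum_mono mult_left_mono power_mono) auto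
  also have "\<dots> = L\<^sup>2"
    using assms(2) by (simp flip: sum_distrib_right)
  finally show ?thesis .
qed

section \<open>Gram matrices and episodes\<close>

lemma ucm_sigma_Suc: "1 \<le> t \<Longrightarrow> ucm_sigma lam H (Suc t) = ucm_sigma lam H t + H t"
  by (cases t) auto

lemma pos_semidef_ucm_sigma:
  assumes "0 \<le> lam" and "\<And>s. 1 \<le> s \<Longrightarrow> pos_semidef (H s)" and "1 \<le> t"
  shows "pos_semidef (ucm_sigma lam H t)"
  using \<open>1 \<le> t\<close>
proof (induction t rule: nat_induct_at_least)
  case base
  then show ?case using pos_semidef_scaleR_mat_1[OF \<open>0 \<le> lam\<close>] by simp
next
  case (Suc t)
  then show ?case using assms(2) by (simp add: ucm_sigma_Suc pos_semidef_add)
qed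

lemma trace_ucm_sigma_le:
  fixes H :: "nat \<Rightarrow> real^'n^'n" and lam c :: real
  assumes "\<And>s. 1 \<le> s \<Longrightarrow> trace (H s) \<le> c" and "1 \<le> t"
  shows "trace (ucm_sigma lam H t) \<le> CARD('n) * lam + (real t - 1) * c"
  using \<open>1 \<le> t\<close>
proof (induction t rule: nat_induct_at_least)
  case base
  then show ?case by (simp add: trace_def Finite_Cartesian_Product.mat_def)
next
  case (Suc t)
  then show ?case using assms(1)[of t] by (simp add: ucm_sigma_Suc trace_add algebra_simps)
qed

lemma det_ucm_sigma_le:
  fixes H :: "nat \<Rightarrow> real^'n^'n" and lam c :: real
  assumes "0 \<le> lam" and "\<And>s. 1 \<le> s \<Longrightarrow> pos_semidef (H s)"
    and "\<And>s. 1 \<le> s \<Longrightarrow> trace (H s) \<le> c" and "1 \<le> t"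
  shows "Determinants.det (ucm_sigma lam H t) \<le> (lam + (real t - 1) * c / CARD('n)) ^ CARD('n)"
proof -
  have psd: "pos_semidef (ucm_sigma lam H t)"
    using assms by (intro pos_semidef_ucm_sigma)
  have "trace (ucm_sigma lam H t) / CARD('n) \<le> (CARD('n) * lam + (real t - 1) * c) / CARD('n)"
    using trace_ucm_sigma_le[OF assms(3,4)] by (simp add: divide_right_mono)
  also have "\<dots> = lam + (real t - 1) * c / CARD('n)"
    by (simp add: field_simps)
  finally have "(trace (ucm_sigma lam H t) / CARD('n)) ^ CARD('n)
      \<le> (lam + (real t - 1) * c / CARD('n)) ^ CARD('n)"
    using pos_semidef_trace_nonneg[OF psd] by (intro power_mono) auto
  with det_le_trace_power[OF psd] show ?thesis by linarith
qed

lemma ep_start_Suc: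
  "1 \<le> t \<Longrightarrow> ep_start S (Suc t) =
     (if 2 * Determinants.det (S (ep_start S t)) < Determinants.det (S (Suc t)) then Suc t
      else ep_start S t)"
  by (cases t) auto

lemma ep_start_bounds: "1 \<le> t \<Longrightarrow> 1 \<le> ep_start S t \<and> ep_start S t \<le> t"
  by (induction t rule: nat_induct_at_least) (auto simp: ep_start_Suc)

lemma num_episodes_Suc:
  "num_episodes S (Suc t) =
     (if ep_start S (Suc t) = Suc t then Suc (num_episodes S t) else num_episodes S t)"
proof -
  have "{u \<in> {1..Suc t}. ep_start S u = u} = (if ep_start S (Suc t) = Suc t
      then insert (Suc t) {u \<in> {1..t}. ep_start S u = u} else {u \<in> {1..t}. ep_start S u = u})"
    by (auto simp: le_Suc_eq)
  then show ?thesis by (simp add: num_episodes_def)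
qed

lemma det_ep_start_ge:
  "1 \<le> t \<Longrightarrow>
    2 ^ num_episodes S t * Determinants.det (S 1) \<le> 2 * Determinants.det (S (ep_start S t))"
proof (induction t rule: nat_induct_at_least)
  case base
  have "{u \<in> {1..1}. ep_start S u = u} = {1}" by auto
  then show ?case by (simp add: num_episodes_def)
next
  case (Suc t)
  then show ?case
    using ep_start_bounds[OF Suc.hyps, of S] by (auto simp: ep_start_Suc num_episodes_Suc)
qed

lemma num_episodes_le_log:
  assumes "1 \<le> T" and "0 < Determinants.det (S 1)"
    and "\<And>t. t \<in> {1..T} \<Longrightarrow> Determinants.det (S t) \<le> B"
  shows "real (num_episodes S T) \<le> 1 + log 2 (B / Determinants.det (S 1))"
proof -
  let ?K = "num_episodes S T"
  have "2 ^ ?K * Determinants.det (S 1) \<le> 2 * B"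
    using det_ep_start_ge[OF assms(1), of S] ep_start_bounds[OF assms(1), of S]
      assms(3)[of "ep_start S T"] by force
  then have le: "2 ^ ?K \<le> 2 * (B / Determinants.det (S 1))"
    using assms(2) by (simp add: field_simps)
  have pos: "0 < 2 * (B / Determinants.det (S 1))"
    using le by (rule less_le_trans[rotated]) simp
  have "log 2 (2 ^ ?K) \<le> log 2 (2 * (B / Determinants.det (S 1)))"
    using le pos by (subst log_le_cancel_iff) auto
  also have "\<dots> = 1 + log 2 (B / Determinants.det (S 1))"
    using pos by (subst log_mult) auto
  finally show ?thesis by simp
qed

theorem lemma21:
  fixes lam L :: real
    and St :: "nat \<Rightarrow> 's set"
    and p :: "nat \<Rightarrow> real^'n \<Rightarrow> 's \<Rightarrow> real"
    and phi :: "nat \<Rightarrow> 's \<Rightarrow> real^'n"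
    and theta :: "nat \<Rightarrow> real^'n"
    and T :: nat
  assumes lam_pos: "lam > 0"
    and fin: "\<And>t. t \<ge> 1 \<Longrightarrow> finite (St t)"
    and p_nonneg: "\<And>t th s. t \<ge> 1 \<Longrightarrow> s \<in> St t \<Longrightarrow> p t th s \<ge> 0"
    and p_sum: "\<And>t th. t \<ge> 1 \<Longrightarrow> (\<Sum>s\<in>St t. p t th s) = 1"
    and phi_bd: "\<And>t s. t \<ge> 1 \<Longrightarrow> s \<in> St t \<Longrightarrow> norm (phi t s) \<le> L"
  shows "real (num_episodes
            (ucm_sigma lam (\<lambda>t. mnl_hess (St t) (p t (theta (Suc t))) (phi t))) T)
         \<le> 1 + real CARD('n) * log 2 (1 + 2 * real T * L\<^sup>2 / lam)"
proof (cases "T = 0")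
  case True
  then show ?thesis by (simp add: num_episodes_def)
next
  case False
  define S where "S = ucm_sigma lam (\<lambda>t. mnl_hess (St t) (p t (theta (Suc t))) (phi t))"
  define n where "n = CARD('n)"
  define X where "X = 2 * real T * L\<^sup>2 / lam"
  have "0 \<le> X" using lam_pos by (simp add: X_def)
  have det_S_1: "Determinants.det (S 1) = lam ^ n"
    by (simp add: S_def n_def det_diagonal Finite_Cartesian_Product.mat_def)
  have "Determinants.det (S t) \<le> (lam * (1 + X)) ^ n" if t: "t \<in> {1..T}" for t
  proof -
    have "Determinants.det (S t) \<le> (lam + (real t - 1) * L\<^sup>2 / n) ^ n"
      unfolding S_def n_def using lam_pos t p_nonneg p_sum phi_bd
      by (intro det_ucm_sigma_le pos_semidef_mnl_hess trace_mnl_hess_le) auto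
    also have "\<dots> \<le> (lam + 2 * real T * L\<^sup>2) ^ n"
    proof (rule power_mono)
      have "(real t - 1) * L\<^sup>2 / n \<le> (real t - 1) * L\<^sup>2"
        using t divide_left_mono[of 1 "real n" "(real t - 1) * L\<^sup>2"] by (simp add: n_def Suc_le_eq)
      also have "\<dots> \<le> 2 * real T * L\<^sup>2"
        using t by (intro mult_right_mono) auto
      finally show "lam + (real t - 1) * L\<^sup>2 / n \<le> lam + 2 * real T * L\<^sup>2" by simp
    qed (use lam_pos t in simp)
    also have "lam + 2 * real T * L\<^sup>2 = lam * (1 + X)"
      using lam_pos by (simp add: X_def field_simps)
    finally show ?thesis .
  qed
  then have "real (num_episodes S T) \<le> 1 + log 2 ((lam * (1 + X)) ^ n / lam ^ n)"
    using num_episodes_le_log[of T S] False lam_pos det_S_1 by simp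
  also have "\<dots> = 1 + n * log 2 (1 + X)"
    using lam_pos \<open>0 \<le> X\<close> by (simp add: power_mult_distrib log_nat_power)
  finally show ?thesis by (simp add: S_def n_def X_def)
qed

end
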